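(* Let $\mathcal{A}=(Q,\Sigma,\delta)$ be a synchronizing DFA with $n$ states. If there is a letter $a\in\Sigma$ of rank $r=|Q.a|\le\sqrt[3]{6n-6}$, then $\mathrm{rt}(\mathcal{A})\le(n-1)^2$.
   Context: A DFA $\mathcal{A}=(Q,\Sigma,\delta)$ has finite state set $Q$ with $|Q|=n$, finite alphabet $\Sigma$, total transition function extended to words; $Q.w=\{\delta(q,w)\mid q\in Q\}$. The rank of a word $w$ is $|Q.w|$. A reset word is a word of rank $1$; $\mathcal{A}$ is synchronizing if one exists, and $\mathrm{rt}(\mathcal{A})$ is the length of a shortest reset word. *)

theory Defs
  imports Complex_Main
begin

definition dfa :: "'q set \<Rightarrow> 's set \<Rightarrow> ('q \<Rightarrow> 's \<Rightarrow> 'q) \<Rightarrow> bool" where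
  "dfa Q Sig delta \<longleftrightarrow> finite Q \<and> Q \<noteq> {} \<and> finite Sig \<and>
     (\<forall>q\<in>Q. \<forall>a\<in>Sig. delta q a \<in> Q)"

definition delta_word :: "('q \<Rightarrow> 's \<Rightarrow> 'q) \<Rightarrow> 'q \<Rightarrow> 's list \<Rightarrow> 'q" where
  "delta_word delta q w = foldl delta q w"

definition image_word :: "'q set \<Rightarrow> ('q \<Rightarrow> 's \<Rightarrow> 'q) \<Rightarrow> 's list \<Rightarrow> 'q set" where
  "image_word Q delta w = (\<lambda>q. delta_word delta q w) ` Q"

definition rank :: "'q set \<Rightarrow> ('q \<Rightarrow> 's \<Rightarrow> 'q) \<Rightarrow> 's list \<Rightarrow> nat" where
  "rank Q delta w = card (image_word Q delta w)"

definition reset_word :: "'q set \<Rightarrow> 's set \<Rightarrow> ('q \<Rightarrow> 's \<Rightarrow> 'q) \<Rightarrow> 's list \<Rightarrow> bool" where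
  "reset_word Q Sig delta w \<longleftrightarrow> set w \<subseteq> Sig \<and> rank Q delta w = 1"

definition synchronizing :: "'q set \<Rightarrow> 's set \<Rightarrow> ('q \<Rightarrow> 's \<Rightarrow> 'q) \<Rightarrow> bool" where
  "synchronizing Q Sig delta \<longleftrightarrow> (\<exists>w. reset_word Q Sig delta w)"

definition rt :: "'q set \<Rightarrow> 's set \<Rightarrow> ('q \<Rightarrow> 's \<Rightarrow> 'q) \<Rightarrow> nat" where
  "rt Q Sig delta = (LEAST k. \<exists>w. reset_word Q Sig delta w \<and> length w = k)"

end

theory Submission
  imports Defs "HOL-Library.Function_Algebras" "HOL-Library.Indicator_Function"
    "HOL-Computational_Algebra.Polynomial"
begin

text \<open>Let \<open>Omega = Q.a\<close> have \<open>r\<close> elements and call \<open>u a\<close> with \<open>|u| < n\<close> an \<open>a\<close>-word; every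
  \<open>a\<close>-word maps \<open>Q\<close> into \<open>Omega\<close> and has length at most \<open>n\<close>. A linear-algebra (Krylov subspace)
  argument in the space of real functions on \<open>Q\<close> shows that some product of \<open>a\<close>-words maps
  \<open>Omega\<close> to a single state. Consequently every \<open>k\<close>-subset of \<open>Omega\<close> with \<open>k \<ge> 2\<close> is compressed by
  a product of \<open>a\<close>-words, and the polynomial method (a skew Bollobas-type inequality for
  symmetric polynomials in two variables) bounds a shortest such product by
  \<open>(r - k + 2) choose 2\<close> factors. Compressing \<open>Omega\<close> step by step after reading \<open>a\<close> yields a
  reset word of length at most \<open>1 + n (r\<^sup>3 - r) / 6\<close>, which is at most \<open>(n - 1)\<^sup>2\<close> when
  \<open>r\<^sup>3 \<le> 6n - 6\<close>.\<close>

section \<open>Linear algebra of real-valued functions\<close>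

instantiation "fun" :: (type, real_vector) real_vector
begin

definition scaleR_fun :: "real \<Rightarrow> ('a \<Rightarrow> 'b) \<Rightarrow> 'a \<Rightarrow> 'b" where
  "scaleR_fun c f = (\<lambda>x. c *\<^sub>R f x)"

instance
  by standard (auto simp: scaleR_fun_def fun_eq_iff scaleR_add_right scaleR_add_left)

end

lemma sum_fun_apply: "sum f A x = (\<Sum>i\<in>A. f i x)"
  by (induction A rule: infinite_finite_induct) auto

lemma linear_eval: "linear (\<lambda>f :: 'a \<Rightarrow> real. f p)"
  by (rule linearI) (auto simp: scaleR_fun_def)

lemma linear_sum_eval: "linear (\<lambda>f :: 'a \<Rightarrow> real. \<Sum>p\<in>P. f p)"
  by (rule linearI) (auto simp: sum.distrib scaleR_fun_def sum_distrib_left)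

lemma supported_in_span_indicators:
  fixes f :: "'a \<Rightarrow> real"
  assumes "finite Q" and "\<And>p. p \<notin> Q \<Longrightarrow> f p = 0"
  shows "f \<in> span ((\<lambda>q. indicator {q}) ` Q)"
proof -
  have "f = (\<Sum>q\<in>Q. f q *\<^sub>R indicator {q})"
    using assms by (auto simp: fun_eq_iff sum_fun_apply scaleR_fun_def indicator_def Int_insert_right)
  also have "\<dots> \<in> span ((\<lambda>q. indicator {q}) ` Q)"
    by (intro span_sum span_scale span_base) auto
  finally show ?thesis .
qed

lemma triangular_functions_independent:
  fixes \<phi> :: "nat \<Rightarrow> 'a \<Rightarrow> real" and p :: "nat \<Rightarrow> 'a"
  assumes diagonal: "\<And>i. i < m \<Longrightarrow> \<phi> i (p i) \<noteq> 0"
    and upper: "\<And>i j. i < j \<Longrightarrow> j < m \<Longrightarrow> \<phi> i (p j) = 0"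
  shows "independent (\<phi> ` {..<m}) \<and> card (\<phi> ` {..<m}) = m"
proof -
  have "independent (\<phi> ` {..<k}) \<and> card (\<phi> ` {..<k}) = k" if "k \<le> m" for k
    using that
  proof (induction k)
    case 0
    then show ?case by (simp add: independent_empty)
  next
    case (Suc k)
    have "\<phi> k \<notin> span (\<phi> ` {..<k})"
    proof
      assume "\<phi> k \<in> span (\<phi> ` {..<k})"
      then have "(\<lambda>f. f (p k)) (\<phi> k) = 0"
        by (rule linear_eq_0_on_span[OF linear_eval, rotated]) (use Suc.prems upper in auto)
      with diagonal Suc.prems show False by simp
    qed
    with Suc show ?case
      using span_base[of "\<phi> k"] by (auto simp: lessThan_Suc independent_insertI card_insert_if)
  qed
  then show ?thesis by simp
qed

lemma subspace_chain_stabilizes: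
  fixes W :: "nat \<Rightarrow> 'a::real_vector set"
  assumes subspace: "\<And>j. subspace (W j)" and mono: "\<And>j. W j \<subseteq> W (Suc j)"
    and nonzero: "v \<in> W 0" "v \<noteq> 0"
    and bounded: "\<And>j. W j \<subseteq> span E" and "finite E"
  shows "\<exists>j<card E. W (Suc j) = W j"
proof (rule ccontr)
  assume strict: "\<not> ?thesis"
  have "\<exists>T. independent T \<and> T \<subseteq> W j \<and> card T = Suc j" if "j \<le> card E" for j
    using that
  proof (induction j)
    case 0
    then show ?case
      using nonzero independent_insertI[of v "{}"] by (intro exI[of _ "{v}"]) (auto simp: independent_empty)
  next
    case (Suc j)
    then obtain T where T: "independent T" "T \<subseteq> W j" "card T = Suc j" by auto
    then have "finite T" by (simp add: card_ge_0_finite)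
    obtain w where w: "w \<in> W (Suc j)" "w \<notin> W j"
      using strict mono[of j] Suc.prems by (metis Suc_le_lessD subsetI subset_antisym)
    then have "w \<notin> span T" using span_minimal[OF T(2) subspace] by auto
    with T w mono[of j] \<open>finite T\<close> show ?case
      by (intro exI[of _ "insert w T"]) (auto simp: independent_insertI card_insert_if span_base)
  qed
  then obtain T where "independent T" "T \<subseteq> W (card E)" "card T = Suc (card E)" by blast
  with independent_span_bound[OF \<open>finite E\<close>] bounded show False
    by (metis not_less_eq_eq order.refl subset_trans)
qed

section \<open>A skew set-pairs inequality\<close>

fun sym_monomial :: "nat \<times> nat \<Rightarrow> real \<times> real \<Rightarrow> real" where
  "sym_monomial (i, j) (s, u) = s ^ i * u ^ j + s ^ j * u ^ i"

definition sym_monomials :: "nat \<Rightarrow> (real \<times> real \<Rightarrow> real) set" where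
  "sym_monomials b = sym_monomial ` {(i, j). i \<le> j \<and> j \<le> b}"

lemma finite_ordered_pairs_atMost: "finite {(i :: nat, j). i \<le> j \<and> j \<le> b}"
proof (rule finite_subset)
  show "{(i :: nat, j). i \<le> j \<and> j \<le> b} \<subseteq> {..b} \<times> {..b}" by auto
qed simp

lemma card_ordered_pairs_atMost: "card {(i :: nat, j). i \<le> j \<and> j \<le> b} = (b + 2) choose 2"
proof (induction b)
  case 0
  have "{(i :: nat, j). i \<le> j \<and> j \<le> 0} = {(0, 0)}" by auto
  then show ?case by (simp add: choose_two)
next
  case (Suc b)
  have "{(i :: nat, j). i \<le> j \<and> j \<le> Suc b}
      = {(i, j). i \<le> j \<and> j \<le> b} \<union> (\<lambda>i. (i, Suc b)) ` {..Suc b}"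
    by auto
  moreover have "card ({(i :: nat, j). i \<le> j \<and> j \<le> b} \<union> (\<lambda>i. (i, Suc b)) ` {..Suc b})
      = card {(i :: nat, j). i \<le> j \<and> j \<le> b} + card ((\<lambda>i. (i, Suc b)) ` {..Suc b})"
    by (rule card_Un_disjoint) (auto simp: finite_ordered_pairs_atMost)
  moreover have "card ((\<lambda>i. (i, Suc b)) ` {..Suc b}) = Suc (Suc b)"
    by (subst card_image) (auto simp: inj_on_def)
  ultimately have "card {(i :: nat, j). i \<le> j \<and> j \<le> Suc b}
      = card {(i :: nat, j). i \<le> j \<and> j \<le> b} + Suc (Suc b)"
    by simp
  then show ?case using Suc by (simp add: numeral_2_eq_2)
qed

lemma card_sym_monomials_le: "card (sym_monomials b) \<le> (b + 2) choose 2"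
  unfolding sym_monomials_def card_ordered_pairs_atMost[symmetric]
  by (rule card_image_le[OF finite_ordered_pairs_atMost])

lemma finite_sym_monomials: "finite (sym_monomials b)"
  unfolding sym_monomials_def by (rule finite_imageI[OF finite_ordered_pairs_atMost])

lemma sum_sym_monomials_apply:
  "(\<Sum>i\<le>d. \<Sum>j\<le>d. (c i * c j / 2) *\<^sub>R sym_monomial (i, j)) (s, u)
    = (\<Sum>i\<le>d. c i * s ^ i) * (\<Sum>j\<le>d. c j * u ^ j)"
proof -
  have "(\<Sum>i\<le>d. \<Sum>j\<le>d. (c i * c j / 2) *\<^sub>R sym_monomial (i, j)) (s, u)
      = (\<Sum>i\<le>d. \<Sum>j\<le>d. c i * c j / 2 * (s ^ i * u ^ j + s ^ j * u ^ i))"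
    by (simp add: sum_fun_apply scaleR_fun_def)
  also have "\<dots> = (\<Sum>i\<le>d. \<Sum>j\<le>d. c i * c j / 2 * (s ^ i * u ^ j))
      + (\<Sum>i\<le>d. \<Sum>j\<le>d. c i * c j / 2 * (s ^ j * u ^ i))"
    by (simp add: distrib_left sum.distrib)
  also have "(\<Sum>i\<le>d. \<Sum>j\<le>d. c i * c j / 2 * (s ^ j * u ^ i))
      = (\<Sum>i\<le>d. \<Sum>j\<le>d. c i * c j / 2 * (s ^ i * u ^ j))"
    by (subst sum.swap) (simp add: mult.commute)
  also have "(\<Sum>i\<le>d. \<Sum>j\<le>d. c i * c j / 2 * (s ^ i * u ^ j))
      + (\<Sum>i\<le>d. \<Sum>j\<le>d. c i * c j / 2 * (s ^ i * u ^ j))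
      = (\<Sum>i\<le>d. c i * s ^ i) * (\<Sum>j\<le>d. c j * u ^ j)"
    by (simp add: sum_product sum.distrib[symmetric] field_simps)
  finally show ?thesis .
qed

lemma prod_shifts_in_span_sym_monomials:
  fixes t :: "'a \<Rightarrow> real"
  assumes "finite B"
  shows "(\<lambda>(s, u). (\<Prod>z\<in>B. s - t z) * (\<Prod>z\<in>B. u - t z)) \<in> span (sym_monomials (card B))"
proof -
  define P where "P = (\<Prod>z\<in>B. [:- t z, 1:])"
  define d where "d = degree P"
  define c where "c = coeff P"
  have expand: "(\<Prod>z\<in>B. x - t z) = (\<Sum>i\<le>d. c i * x ^ i)" for x
  proof -
    have "poly P x = (\<Prod>z\<in>B. x - t z)" by (simp add: P_def poly_prod)
    then show ?thesis by (simp add: poly_altdef d_def c_def)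
  qed
  have "d \<le> card B"
    using degree_prod_sum_le[OF \<open>finite B\<close>, of "\<lambda>z. [:- t z, 1:]"] by (simp add: d_def P_def)
  then have monomial_in: "sym_monomial (i, j) \<in> span (sym_monomials (card B))"
    if "i \<le> d" "j \<le> d" for i j
  proof (cases "i \<le> j")
    case True
    with that \<open>d \<le> card B\<close> show ?thesis by (intro span_base) (auto simp: sym_monomials_def)
  next
    case False
    have "sym_monomial (i, j) = sym_monomial (j, i)" by (auto simp: fun_eq_iff)
    with False that \<open>d \<le> card B\<close> show ?thesis by (intro span_base) (auto simp: sym_monomials_def)
  qed
  have "(\<lambda>(s, u). (\<Prod>z\<in>B. s - t z) * (\<Prod>z\<in>B. u - t z))
      = (\<Sum>i\<le>d. \<Sum>j\<le>d. (c i * c j / 2) *\<^sub>R sym_monomial (i, j))"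
    by (simp add: fun_eq_iff expand sum_sym_monomials_apply)
  also have "\<dots> \<in> span (sym_monomials (card B))"
    by (intro span_sum span_scale monomial_in) auto
  finally show ?thesis .
qed

text \<open>A skew Bollobas-type bound, by the polynomial method: the functions
  \<open>(s, u) \<mapsto> \<Prod>z\<in>B i. (s - z) (u - z)\<close> are triangular with respect to the points
  \<open>(x i, y i)\<close> and lie in the span of \<open>(b + 2) choose 2\<close> symmetric monomials.\<close>
lemma skew_set_pairs_bound:
  fixes x y :: "nat \<Rightarrow> 'a" and B :: "nat \<Rightarrow> 'a set"
  assumes finite: "\<And>i. i < m \<Longrightarrow> finite (B i)" and card: "\<And>i. i < m \<Longrightarrow> card (B i) = b"
    and avoid: "\<And>i. i < m \<Longrightarrow> x i \<notin> B i \<and> y i \<notin> B i"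
    and meet: "\<And>i j. i < j \<Longrightarrow> j < m \<Longrightarrow> x j \<in> B i \<or> y j \<in> B i"
  shows "m \<le> (b + 2) choose 2"
proof -
  define U where "U = (\<Union>i<m. B i) \<union> x ` {..<m} \<union> y ` {..<m}"
  have "finite U" using finite by (auto simp: U_def)
  then obtain f :: "'a \<Rightarrow> nat" where f: "inj_on f U"
    using finite_imp_inj_to_nat_seg by metis
  define t where "t z = real (f z)" for z
  define \<phi> where "\<phi> i = (\<lambda>(s, u). (\<Prod>z\<in>B i. s - t z) * (\<Prod>z\<in>B i. u - t z))" for i
  define p where "p i = (t (x i), t (y i))" for i
  have t_eq: "t v = t w \<longleftrightarrow> v = w" if "v \<in> U" "w \<in> U" for v w
    using f that by (auto simp: t_def inj_on_def)
  have "\<phi> i (p i) \<noteq> 0" if "i < m" for i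
  proof -
    have "x i \<in> U" "y i \<in> U" "B i \<subseteq> U" using that by (auto simp: U_def)
    with avoid[OF that] finite[OF that] t_eq show ?thesis
      by (auto simp: \<phi>_def p_def)
  qed
  moreover have "\<phi> i (p j) = 0" if "i < j" "j < m" for i j
    using meet[OF that] finite[of i] that by (auto simp: \<phi>_def p_def)
  ultimately have independent: "independent (\<phi> ` {..<m}) \<and> card (\<phi> ` {..<m}) = m"
    by (rule triangular_functions_independent)
  have "\<phi> ` {..<m} \<subseteq> span (sym_monomials b)"
    using prod_shifts_in_span_sym_monomials finite card by (auto simp: \<phi>_def)
  then have "m \<le> card (sym_monomials b)"
    using independent_span_bound[OF finite_sym_monomials] independent by metis
  then show ?thesis using card_sym_monomials_le order_trans by blast
qed

lemma card_image_less_iff_not_inj_on: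
  "finite A \<Longrightarrow> card (f ` A) < card A \<longleftrightarrow> \<not> inj_on f A"
  by (metis card_image_le inj_on_iff_eq_card order_less_le)

lemma delta_word_Nil [simp]: "delta_word delta q [] = q"
  by (simp add: delta_word_def)

lemma delta_word_Cons [simp]: "delta_word delta q (x # u) = delta_word delta (delta q x) u"
  by (simp add: delta_word_def)

lemma delta_word_append: "delta_word delta q (u @ v) = delta_word delta (delta_word delta q u) v"
  by (simp add: delta_word_def)

lemma delta_word_in_states:
  "dfa Q Sig delta \<Longrightarrow> q \<in> Q \<Longrightarrow> set u \<subseteq> Sig \<Longrightarrow> delta_word delta q u \<in> Q"
  by (induction u arbitrary: q) (auto simp: dfa_def)

lemma image_word_Nil [simp]: "image_word S delta [] = S"
  by (simp add: image_word_def)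

lemma image_word_append:
  "image_word S delta (u @ v) = image_word (image_word S delta u) delta v"
  by (auto simp: image_word_def delta_word_append image_image)

lemma image_word_mono: "S \<subseteq> T \<Longrightarrow> image_word S delta w \<subseteq> image_word T delta w"
  by (auto simp: image_word_def)

lemma finite_image_word: "finite S \<Longrightarrow> finite (image_word S delta w)"
  by (simp add: image_word_def)

lemma card_image_word_le: "finite S \<Longrightarrow> card (image_word S delta w) \<le> card S"
  by (simp add: image_word_def card_image_le)

lemma rt_le_length: "reset_word Q Sig delta w \<Longrightarrow> rt Q Sig delta \<le> length w"
  unfolding rt_def by (rule Least_le) blast

lemma image_word_concat_subset:
  assumes closed: "\<And>w. w \<in> G \<Longrightarrow> image_word Om delta w \<subseteq> Om"
  shows "ws \<in> lists G \<Longrightarrow> S \<subseteq> Om \<Longrightarrow> image_word S delta (concat ws) \<subseteq> Om"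
proof (induction ws arbitrary: S)
  case Nil
  then show ?case by simp
next
  case (Cons w ws)
  then have "w \<in> G" "ws \<in> lists G" by auto
  have "image_word S delta w \<subseteq> image_word Om delta w"
    using Cons.prems(2) by (rule image_word_mono)
  also have "\<dots> \<subseteq> Om" using closed[OF \<open>w \<in> G\<close>] .
  finally show ?case using Cons.IH[OF \<open>ws \<in> lists G\<close>] by (simp add: image_word_append)
qed

section \<open>Shortest compressing products\<close>

context
  fixes delta :: "'q \<Rightarrow> 's \<Rightarrow> 'q" and G :: "'s list set" and Om S :: "'q set"
    and ws :: "'s list list"
  assumes finite_Om: "finite Om"
    and closed: "\<And>w. w \<in> G \<Longrightarrow> image_word Om delta w \<subseteq> Om"
    and S_subset: "S \<subseteq> Om"
    and compressing: "ws \<in> lists G" "card (image_word S delta (concat ws)) < card S"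
    and shortest: "\<And>vs. vs \<in> lists G \<Longrightarrow> card (image_word S delta (concat vs)) < card S
      \<Longrightarrow> length ws \<le> length vs"
begin

lemma take_drop_in_lists: "take i ws \<in> lists G" "drop i ws \<in> lists G"
  using compressing(1) by (auto simp: in_lists_conv_set dest: in_set_takeD in_set_dropD)

lemma prefix_image_subset: "image_word S delta (concat (take i ws)) \<subseteq> Om"
  by (rule image_word_concat_subset[OF closed take_drop_in_lists(1) S_subset])

lemma finite_prefix_image: "finite (image_word S delta (concat (take i ws)))"
  using prefix_image_subset finite_Om finite_subset by blast

lemma card_prefix_image:
  assumes "i < length ws"
  shows "card (image_word S delta (concat (take i ws))) = card S"
proof -
  have "\<not> card (image_word S delta (concat (take i ws))) < card S"
    using shortest[OF take_drop_in_lists(1), of i] assms by auto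
  moreover have "card (image_word S delta (concat (take i ws))) \<le> card S"
    by (rule card_image_word_le[OF finite_subset[OF S_subset finite_Om]])
  ultimately show ?thesis by simp
qed

lemma suffix_not_inj_on_prefix_image:
  assumes "i < length ws"
  shows "\<not> inj_on (\<lambda>q. delta_word delta q (concat (drop i ws)))
    (image_word S delta (concat (take i ws)))"
proof -
  have "(\<lambda>q. delta_word delta q (concat (drop i ws))) ` image_word S delta (concat (take i ws))
      = image_word S delta (concat ws)"
    unfolding image_word_def image_image delta_word_append[symmetric]
    by (simp flip: concat_append)
  with compressing(2) card_prefix_image[OF assms]
  have "card ((\<lambda>q. delta_word delta q (concat (drop i ws))) ` image_word S delta (concat (take i ws)))
      < card (image_word S delta (concat (take i ws)))"
    by simp
  then show ?thesis using card_image_less_iff_not_inj_on[OF finite_prefix_image] by blast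
qed

lemma suffix_inj_on_earlier_prefix_image:
  assumes "i < j" "j < length ws"
  shows "inj_on (\<lambda>q. delta_word delta q (concat (drop j ws)))
    (image_word S delta (concat (take i ws)))"
proof (rule ccontr)
  assume not_inj: "\<not> ?thesis"
  define vs where "vs = take i ws @ drop j ws"
  have "vs \<in> lists G" using take_drop_in_lists by (simp add: vs_def)
  have "image_word S delta (concat vs)
      = (\<lambda>q. delta_word delta q (concat (drop j ws))) ` image_word S delta (concat (take i ws))"
    unfolding vs_def concat_append image_word_append by (simp add: image_word_def)
  moreover have "card ((\<lambda>q. delta_word delta q (concat (drop j ws))) ` image_word S delta (concat (take i ws)))
      < card (image_word S delta (concat (take i ws)))"
    using not_inj card_image_less_iff_not_inj_on[OF finite_prefix_image] by blast
  ultimately have "card (image_word S delta (concat vs)) < card S"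
    using card_prefix_image[of i] assms by simp
  then have "length ws \<le> length vs" using shortest \<open>vs \<in> lists G\<close> by blast
  with assms show False by (simp add: vs_def)
qed

text \<open>Each suffix merges a pair \<open>X i \<noteq> Y i\<close> in the \<open>i\<close>-th prefix image, and it is injective on
  all earlier prefix images, so the complements of the prefix images form a skew family of set
  pairs with these pairs.\<close>
lemma shortest_compressing_product_length: "length ws \<le> (card Om - card S + 2) choose 2"
proof -
  define P where "P i = image_word S delta (concat (take i ws))" for i
  define merge where "merge i q = delta_word delta q (concat (drop i ws))" for i q
  have "\<forall>i. \<exists>x y. i < length ws \<longrightarrow> x \<in> P i \<and> y \<in> P i \<and> x \<noteq> y \<and> merge i x = merge i y"
    using suffix_not_inj_on_prefix_image unfolding P_def merge_def inj_on_def by blast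
  then obtain X Y where XY: "\<And>i. i < length ws \<Longrightarrow>
      X i \<in> P i \<and> Y i \<in> P i \<and> X i \<noteq> Y i \<and> merge i (X i) = merge i (Y i)"
    by metis
  show ?thesis
  proof (rule skew_set_pairs_bound[where B = "\<lambda>i. Om - P i" and x = X and y = Y])
    show "finite (Om - P i)" for i
      using finite_Om by simp
    show "card (Om - P i) = card Om - card S" if "i < length ws" for i
      using card_prefix_image[OF that] prefix_image_subset finite_prefix_image
      by (simp add: P_def card_Diff_subset)
    show "X i \<notin> Om - P i \<and> Y i \<notin> Om - P i" if "i < length ws" for i
      using XY[OF that] by simp
    show "X j \<in> Om - P i \<or> Y j \<in> Om - P i" if "i < j" "j < length ws" for i j
    proof -
      have "\<not> (X j \<in> P i \<and> Y j \<in> P i)"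
        using suffix_inj_on_earlier_prefix_image[OF that] XY[OF that(2)]
        by (auto simp: P_def merge_def inj_on_def)
      moreover have "X j \<in> Om" "Y j \<in> Om"
        using XY[OF that(2)] prefix_image_subset by (auto simp: P_def)
      ultimately show ?thesis by simp
    qed
  qed
qed

end

locale synchronizing_dfa_letter =
  fixes Q :: "'q set" and Sig :: "'s set" and delta :: "'q \<Rightarrow> 's \<Rightarrow> 'q" and a :: 's
  assumes dfa: "dfa Q Sig delta"
    and synchronizing: "synchronizing Q Sig delta"
    and letter: "a \<in> Sig"
begin

definition Omega :: "'q set" where
  "Omega = image_word Q delta [a]"

definition a_words :: "'s list set" where
  "a_words = {u @ [a] | u. set u \<subseteq> Sig \<and> length u < card Q}"

lemma finite_states: "finite Q" and states_nonempty: "Q \<noteq> {}"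
  using dfa by (auto simp: dfa_def)

lemma Omega_subset_states: "Omega \<subseteq> Q"
  using dfa letter by (auto simp: Omega_def image_word_def dfa_def)

lemma finite_Omega: "finite Omega"
  using Omega_subset_states finite_states finite_subset by blast

lemma Omega_nonempty: "Omega \<noteq> {}"
  using states_nonempty by (simp add: Omega_def image_word_def)

lemma a_words_concat:
  "ws \<in> lists a_words \<Longrightarrow> set (concat ws) \<subseteq> Sig \<and> length (concat ws) \<le> card Q * length ws"
proof (induction ws)
  case Nil
  then show ?case by simp
next
  case (Cons w ws)
  then show ?case using letter by (auto simp: a_words_def)
qed

lemma image_a_word_subset:
  assumes "w \<in> a_words" "S \<subseteq> Q"
  shows "image_word S delta w \<subseteq> Omega"
proof -
  obtain u where u: "w = u @ [a]" "set u \<subseteq> Sig" using assms(1) by (auto simp: a_words_def)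
  have "image_word S delta u \<subseteq> Q"
    using assms(2) u(2) delta_word_in_states[OF dfa] by (auto simp: image_word_def)
  then show ?thesis
    unfolding u(1) image_word_append Omega_def by (rule image_word_mono)
qed

lemma image_a_words_subset:
  "ws \<in> lists a_words \<Longrightarrow> S \<subseteq> Omega \<Longrightarrow> image_word S delta (concat ws) \<subseteq> Omega"
  using image_word_concat_subset image_a_word_subset[OF _ Omega_subset_states] by blast

lemma reset_to_state: "\<exists>z t. set z \<subseteq> Sig \<and> t \<in> Q \<and> (\<forall>p\<in>Q. delta_word delta p z = t)"
proof -
  obtain z where z: "set z \<subseteq> Sig" "card (image_word Q delta z) = 1"
    using synchronizing by (auto simp: synchronizing_def reset_word_def rank_def)
  then obtain t where t: "image_word Q delta z = {t}" by (meson card_1_singletonE)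
  then have "\<forall>p\<in>Q. delta_word delta p z = t" by (auto simp: image_word_def)
  moreover obtain q where "q \<in> Q" using states_nonempty by blast
  ultimately show ?thesis using z(1) delta_word_in_states[OF dfa \<open>q \<in> Q\<close> z(1)] by metis
qed

end

section \<open>Compressing \<open>Omega\<close> to a single state\<close>

locale minimal_a_product = synchronizing_dfa_letter Q Sig delta a
  for Q :: "'q set" and Sig :: "'s set" and delta a +
  fixes ws :: "'s list list"
  assumes ws: "ws \<in> lists a_words"
    and minimal: "\<And>vs. vs \<in> lists a_words \<Longrightarrow>
      card (image_word Omega delta (concat ws)) \<le> card (image_word Omega delta (concat vs))"
begin

definition g :: "'s list" where
  "g = concat ws"

definition Gamma :: "'q set" where
  "Gamma = image_word Omega delta g"

lemma Gamma_subset_Omega: "Gamma \<subseteq> Omega"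
  using image_a_words_subset[OF ws] by (simp add: Gamma_def g_def)

lemma finite_Gamma: "finite Gamma"
  using Gamma_subset_Omega finite_Omega finite_subset by blast

lemma Gamma_nonempty: "Gamma \<noteq> {}"
  using Omega_nonempty by (simp add: Gamma_def image_word_def)

lemma bij_betw_Gamma:
  assumes "set u \<subseteq> Sig" "length u < card Q"
  shows "bij_betw (\<lambda>p. delta_word delta p (u @ a # g)) Gamma Gamma"
proof -
  have "u @ [a] \<in> a_words" using assms by (auto simp: a_words_def)
  then have vs: "ws @ [u @ [a]] @ ws \<in> lists a_words" using ws by simp
  have image_eq: "(\<lambda>p. delta_word delta p (u @ a # g)) ` Gamma
      = image_word Omega delta (concat (ws @ [u @ [a]] @ ws))"
    by (simp add: Gamma_def image_word_def image_image delta_word_append g_def)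
  have "(\<lambda>p. delta_word delta p (u @ a # g)) ` Gamma
      = image_word (image_word Omega delta (concat (ws @ [u @ [a]]))) delta g"
    by (simp add: Gamma_def image_word_def image_image delta_word_append g_def)
  also have "\<dots> \<subseteq> Gamma"
    unfolding Gamma_def
    by (rule image_word_mono, rule image_a_words_subset) (use ws \<open>u @ [a] \<in> a_words\<close> in auto)
  finally have "(\<lambda>p. delta_word delta p (u @ a # g)) ` Gamma \<subseteq> Gamma" .
  moreover have "card Gamma \<le> card ((\<lambda>p. delta_word delta p (u @ a # g)) ` Gamma)"
    unfolding image_eq unfolding Gamma_def g_def by (rule minimal[OF vs])
  ultimately show ?thesis
    using finite_Gamma card_image_le
    by (metis bij_betw_def card_subset_eq inj_on_iff_eq_card le_antisym)
qed

definition act :: "'s list \<Rightarrow> ('q \<Rightarrow> real) \<Rightarrow> 'q \<Rightarrow> real" where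
  "act u f q = (if q \<in> Q then f (delta_word delta q u) else 0)"

text \<open>The shift by \<open>1 / card Gamma\<close> makes the translates of \<open>psi y\<close> by short words sum to zero
  over \<open>Gamma\<close>, since \<open>u a g\<close> permutes \<open>Gamma\<close>.\<close>
definition psi :: "'q \<Rightarrow> 'q \<Rightarrow> real" where
  "psi y p = (if p \<in> Q then of_bool (delta_word delta p (a # g) = y) - 1 / card Gamma else 0)"

lemma act_psi:
  "q \<in> Q \<Longrightarrow> set u \<subseteq> Sig \<Longrightarrow>
    act u (psi y) q = of_bool (delta_word delta q (u @ a # g) = y) - 1 / card Gamma"
  using delta_word_in_states[OF dfa] by (simp add: act_def psi_def delta_word_append)

lemma act_Cons: "x \<in> Sig \<Longrightarrow> act (x # u) f = act [x] (act u f)"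
  using dfa by (auto simp: act_def fun_eq_iff dfa_def)

lemma linear_act: "linear (act u)"
  by (rule linearI) (auto simp: act_def fun_eq_iff scaleR_fun_def)

lemma sum_Gamma_act_psi:
  assumes "set u \<subseteq> Sig" "length u < card Q" "y \<in> Gamma"
  shows "(\<Sum>p\<in>Gamma. act u (psi y) p) = 0"
proof -
  have "(\<Sum>p\<in>Gamma. act u (psi y) p)
      = (\<Sum>p\<in>Gamma. of_bool (delta_word delta p (u @ a # g) = y)) - card Gamma / card Gamma"
    using Gamma_subset_Omega Omega_subset_states assms(1)
    by (simp add: act_psi sum_subtractf subset_iff)
  also have "(\<Sum>p\<in>Gamma. of_bool (delta_word delta p (u @ a # g) = y)) = (\<Sum>q\<in>Gamma. of_bool (q = y) :: real)"
    by (rule sum.reindex_bij_betw[OF bij_betw_Gamma[OF assms(1,2)]])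
  also have "\<dots> = 1"
    using assms(3) finite_Gamma by simp
  finally show ?thesis using Gamma_nonempty finite_Gamma by simp
qed

definition krylov :: "nat \<Rightarrow> ('q \<Rightarrow> real) set" where
  "krylov j = span {act u (psi y) | u y. set u \<subseteq> Sig \<and> length u \<le> j \<and> y \<in> Gamma}"

lemma act_psi_in_krylov: "set u \<subseteq> Sig \<Longrightarrow> y \<in> Gamma \<Longrightarrow> act u (psi y) \<in> krylov (length u)"
  unfolding krylov_def by (rule span_base) blast

lemma subspace_krylov: "subspace (krylov j)"
  by (simp add: krylov_def)

lemma krylov_mono: "i \<le> j \<Longrightarrow> krylov i \<subseteq> krylov j"
  unfolding krylov_def by (intro span_mono) (auto intro: order.trans)

lemma act_letter_krylov:
  assumes "x \<in> Sig" "f \<in> krylov j"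
  shows "act [x] f \<in> krylov (Suc j)"
proof -
  have "act [x] ` krylov j
      = span (act [x] ` {act u (psi y) | u y. set u \<subseteq> Sig \<and> length u \<le> j \<and> y \<in> Gamma})"
    unfolding krylov_def by (simp add: span_linear_image[OF linear_act])
  also have "\<dots> \<subseteq> krylov (Suc j)"
    unfolding krylov_def
  proof (rule span_mono, rule subsetI)
    fix f assume "f \<in> act [x] ` {act u (psi y) | u y. set u \<subseteq> Sig \<and> length u \<le> j \<and> y \<in> Gamma}"
    then obtain u y where "f = act [x] (act u (psi y))" "set u \<subseteq> Sig" "length u \<le> j" "y \<in> Gamma"
      by blast
    moreover note act_Cons[OF assms(1), of u "psi y"]
    ultimately show "f \<in> {act u (psi y) | u y. set u \<subseteq> Sig \<and> length u \<le> Suc j \<and> y \<in> Gamma}"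
      using assms(1) by (intro CollectI exI[of _ "x # u"] exI[of _ y]) auto
  qed
  finally show ?thesis using assms(2) by blast
qed

lemma krylov_stable:
  assumes "krylov (Suc j) = krylov j"
  shows "krylov (j + i) = krylov j"
proof (induction i)
  case 0
  show ?case by simp
next
  case (Suc i)
  have "krylov (Suc (j + i)) \<subseteq> krylov j"
    unfolding krylov_def[of "Suc (j + i)"]
  proof (rule span_minimal[OF _ subspace_krylov], rule subsetI)
    fix f assume "f \<in> {act u (psi y) | u y. set u \<subseteq> Sig \<and> length u \<le> Suc (j + i) \<and> y \<in> Gamma}"
    then obtain u y where f: "f = act u (psi y)"
      and u: "set u \<subseteq> Sig" "length u \<le> Suc (j + i)" and y: "y \<in> Gamma"
      by blast
    show "f \<in> krylov j"
    proof (cases u)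
      case Nil
      then have "f \<in> krylov 0" using act_psi_in_krylov[OF u(1) y] f by simp
      then show ?thesis using krylov_mono[of 0 j] by blast
    next
      case (Cons x v)
      then have "act v (psi y) \<in> krylov (j + i)"
        using krylov_mono[of "length v" "j + i"] act_psi_in_krylov[of v y] u y by auto
      then have "act [x] (act v (psi y)) \<in> krylov j"
        using act_letter_krylov[of x "act v (psi y)" j] Suc.IH assms Cons u(1) by simp
      moreover have "x \<in> Sig" using u(1) Cons by simp
      ultimately show ?thesis using f Cons act_Cons[of x v "psi y"] by simp
    qed
  qed
  then show ?case using krylov_mono[of j "Suc (j + i)"] by simp
qed

lemma krylov_subset_span_indicators: "krylov j \<subseteq> span ((\<lambda>q. indicator {q}) ` Q)"
  unfolding krylov_def
  by (rule span_minimal) (auto simp: act_def intro!: supported_in_span_indicators finite_states)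

lemma act_psi_in_krylov_states:
  assumes "2 \<le> card Gamma" "set u \<subseteq> Sig" "y \<in> Gamma"
  shows "act u (psi y) \<in> krylov (card Q - 1)"
proof -
  obtain y0 where "y0 \<in> Gamma" using Gamma_nonempty by blast
  then obtain p where "p \<in> Omega" "y0 = delta_word delta p g"
    by (auto simp: Gamma_def image_word_def)
  then obtain q where q: "q \<in> Q" "delta_word delta q (a # g) = y0"
    by (auto simp: Omega_def image_word_def)
  then have "psi y0 q \<noteq> 0" using assms(1) by (simp add: psi_def)
  then have nonzero: "psi y0 \<noteq> 0" by auto
  have "act [] (psi y0) = psi y0" by (simp add: act_def psi_def fun_eq_iff)
  then have start: "psi y0 \<in> krylov 0" using act_psi_in_krylov[of "[]" y0] \<open>y0 \<in> Gamma\<close> by simp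
  have step: "krylov j \<subseteq> krylov (Suc j)" for j by (simp add: krylov_mono)
  obtain j where "j < card ((\<lambda>q. indicator {q} :: 'q \<Rightarrow> real) ` Q)" and j: "krylov (Suc j) = krylov j"
    using subspace_chain_stabilizes[OF subspace_krylov step start nonzero
        krylov_subset_span_indicators finite_imageI[OF finite_states]]
    by blast
  then have "j < card Q"
    using card_image_le[OF finite_states, of "\<lambda>q. indicator {q} :: 'q \<Rightarrow> real"] by linarith
  have "krylov (length u) \<subseteq> krylov (card Q - 1)"
  proof (cases "length u \<le> card Q - 1")
    case False
    then have "krylov (length u) = krylov j"
      using krylov_stable[OF j, of "length u - j"] \<open>j < card Q\<close> by simp
    then show ?thesis using \<open>j < card Q\<close> krylov_mono[of j] by simp
  qed (rule krylov_mono)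
  with act_psi_in_krylov[OF assms(2,3)] show ?thesis by blast
qed

lemma sum_Gamma_krylov:
  assumes "f \<in> krylov (card Q - 1)"
  shows "(\<Sum>p\<in>Gamma. f p) = 0"
proof -
  have "card Q > 0" using states_nonempty finite_states by (simp add: card_gt_0_iff)
  have "(\<lambda>f. \<Sum>p\<in>Gamma. f p) f = 0"
  proof (rule linear_eq_0_on_span[OF linear_sum_eval])
    show "f \<in> span {act u (psi y) | u y. set u \<subseteq> Sig \<and> length u \<le> card Q - 1 \<and> y \<in> Gamma}"
      using assms by (simp add: krylov_def)
  next
    fix h assume "h \<in> {act u (psi y) | u y. set u \<subseteq> Sig \<and> length u \<le> card Q - 1 \<and> y \<in> Gamma}"
    then obtain u y where "h = act u (psi y)" "set u \<subseteq> Sig" "length u \<le> card Q - 1" "y \<in> Gamma"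
      by blast
    with \<open>card Q > 0\<close> show "(\<Sum>p\<in>Gamma. h p) = 0" using sum_Gamma_act_psi by simp
  qed
  then show ?thesis by simp
qed

text \<open>If a reset word \<open>z\<close> sends every state to \<open>t\<close>, then \<open>act z (psi (t a g))\<close> is the constant
  \<open>1 - 1 / card Gamma\<close> on \<open>Gamma\<close>, so its sum over \<open>Gamma\<close> cannot vanish.\<close>
lemma card_Gamma_eq_1: "card Gamma = 1"
proof (rule ccontr)
  assume "card Gamma \<noteq> 1"
  moreover have "card Gamma > 0" using Gamma_nonempty finite_Gamma by (simp add: card_gt_0_iff)
  ultimately have two: "2 \<le> card Gamma" by linarith
  obtain z t where z: "set z \<subseteq> Sig" "t \<in> Q" and reset: "\<forall>p\<in>Q. delta_word delta p z = t"
    using reset_to_state by blast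
  define y where "y = delta_word delta t (a # g)"
  have "delta t a \<in> Omega"
    unfolding Omega_def image_word_def using \<open>t \<in> Q\<close> by (rule rev_image_eqI) simp
  then have "y \<in> Gamma"
    unfolding Gamma_def image_word_def by (rule rev_image_eqI) (simp add: y_def)
  have "act z (psi y) p = 1 - 1 / card Gamma" if "p \<in> Gamma" for p
  proof -
    have "p \<in> Q" using that Gamma_subset_Omega Omega_subset_states by blast
    with reset show ?thesis by (simp add: act_psi z(1) delta_word_append y_def)
  qed
  then have "(\<Sum>p\<in>Gamma. act z (psi y) p) = card Gamma * (1 - 1 / card Gamma)" by simp
  moreover have "(\<Sum>p\<in>Gamma. act z (psi y) p) = 0"
    by (rule sum_Gamma_krylov[OF act_psi_in_krylov_states[OF two z(1) \<open>y \<in> Gamma\<close>]])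
  ultimately show False using two by (simp add: field_simps)
qed

end

section \<open>The length bound\<close>

context synchronizing_dfa_letter
begin

lemma Omega_compressible: "\<exists>ws\<in>lists a_words. card (image_word Omega delta (concat ws)) = 1"
proof -
  obtain ws where ws: "ws \<in> lists a_words" and minimal: "\<And>vs. vs \<in> lists a_words \<Longrightarrow>
      card (image_word Omega delta (concat ws)) \<le> card (image_word Omega delta (concat vs))"
    using ex_has_least_nat[of "\<lambda>ws. ws \<in> lists a_words" "[]"
        "\<lambda>ws. card (image_word Omega delta (concat ws))"]
    by auto
  interpret minimal_a_product Q Sig delta a ws
    using ws minimal by unfold_locales
  show ?thesis using ws card_Gamma_eq_1 by (auto simp: Gamma_def g_def)
qed

lemma compressing_a_product:
  assumes S: "S \<subseteq> Omega" and "2 \<le> card S"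
  shows "\<exists>ws\<in>lists a_words. card (image_word S delta (concat ws)) < card S
    \<and> length ws \<le> (card Omega - card S + 2) choose 2"
proof -
  obtain ws1 where ws1: "ws1 \<in> lists a_words" "card (image_word Omega delta (concat ws1)) = 1"
    using Omega_compressible by blast
  have "card (image_word S delta (concat ws1)) \<le> card (image_word Omega delta (concat ws1))"
    by (rule card_mono[OF finite_image_word[OF finite_Omega] image_word_mono[OF S]])
  with ws1 \<open>2 \<le> card S\<close> have "card (image_word S delta (concat ws1)) < card S" by simp
  then obtain ws where ws: "ws \<in> lists a_words" "card (image_word S delta (concat ws)) < card S"
    and shortest: "\<And>vs. vs \<in> lists a_words \<and> card (image_word S delta (concat vs)) < card S
      \<Longrightarrow> length ws \<le> length vs"
    using ex_has_least_nat[of "\<lambda>ws. ws \<in> lists a_words \<and> card (image_word S delta (concat ws)) < card S"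
        ws1 length] ws1(1)
    by blast
  have "length ws \<le> (card Omega - card S + 2) choose 2"
    using shortest_compressing_product_length[OF finite_Omega _ S ws] shortest
      image_a_word_subset[OF _ Omega_subset_states]
    by blast
  with ws show ?thesis by blast
qed

lemma subset_synchronizing_word:
  assumes "S \<subseteq> Omega" "S \<noteq> {}"
  shows "\<exists>w. set w \<subseteq> Sig \<and> card (image_word S delta w) = 1 \<and>
    length w \<le> card Q * (\<Sum>j=2..card S. (card Omega - j + 2) choose 2)"
  using assms
proof (induction "card S" arbitrary: S rule: less_induct)
  case less
  have "finite S" using less.prems finite_Omega finite_subset by blast
  show ?case
  proof (cases "card S = 1")
    case True
    then show ?thesis by (intro exI[of _ "[]"]) auto
  next
    case False
    moreover have "card S > 0" using less.prems(2) \<open>finite S\<close> by (simp add: card_gt_0_iff)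
    ultimately have "2 \<le> card S" by linarith
    then obtain ws where ws: "ws \<in> lists a_words"
      and smaller: "card (image_word S delta (concat ws)) < card S"
      and length_ws: "length ws \<le> (card Omega - card S + 2) choose 2"
      using compressing_a_product[OF less.prems(1)] by blast
    define S' where "S' = image_word S delta (concat ws)"
    have "S' \<subseteq> Omega" unfolding S'_def by (rule image_a_words_subset[OF ws less.prems(1)])
    moreover have "S' \<noteq> {}" using less.prems(2) by (simp add: S'_def image_word_def)
    ultimately obtain w where w: "set w \<subseteq> Sig" "card (image_word S' delta w) = 1"
      "length w \<le> card Q * (\<Sum>j=2..card S'. (card Omega - j + 2) choose 2)"
      using less.hyps[OF smaller[folded S'_def]] by blast
    have sum_split: "(\<Sum>j=2..card S. (card Omega - j + 2) choose 2)
        = ((card Omega - card S + 2) choose 2) + (\<Sum>j=2..card S - 1. (card Omega - j + 2) choose 2)"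
      using \<open>2 \<le> card S\<close> by (cases "card S") (simp_all add: sum.cl_ivl_Suc)
    have "set (concat ws) \<subseteq> Sig" and length_concat: "length (concat ws) \<le> card Q * length ws"
      using a_words_concat[OF ws] by auto
    have "length (concat ws @ w) \<le> card Q * length ws + card Q * (\<Sum>j=2..card S'. (card Omega - j + 2) choose 2)"
      using length_concat w(3) by simp
    also have "\<dots> \<le> card Q * ((card Omega - card S + 2) choose 2)
        + card Q * (\<Sum>j=2..card S - 1. (card Omega - j + 2) choose 2)"
      using smaller length_ws by (intro add_mono mult_le_mono2 sum_mono2) (auto simp: S'_def)
    also have "\<dots> = card Q * (\<Sum>j=2..card S. (card Omega - j + 2) choose 2)"
      by (simp only: sum_split distrib_left)
    finally have "length (concat ws @ w) \<le> card Q * (\<Sum>j=2..card S. (card Omega - j + 2) choose 2)" .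
    moreover have "card (image_word S delta (concat ws @ w)) = 1"
      using w(2) by (simp add: image_word_append S'_def)
    ultimately show ?thesis using w(1) \<open>set (concat ws) \<subseteq> Sig\<close>
      by (intro exI[of _ "concat ws @ w"]) auto
  qed
qed

lemma reset_word_length_bound:
  "\<exists>w. reset_word Q Sig delta w \<and>
    length w \<le> 1 + card Q * (\<Sum>i=2..card Omega. i choose 2)"
proof -
  obtain w where w: "set w \<subseteq> Sig" "card (image_word Omega delta w) = 1"
    "length w \<le> card Q * (\<Sum>j=2..card Omega. (card Omega - j + 2) choose 2)"
    using subset_synchronizing_word[OF order_refl Omega_nonempty] by blast
  have "(\<Sum>j=2..card Omega. (card Omega - j + 2) choose 2) = (\<Sum>i=2..card Omega. i choose 2)"
    by (rule sum.reindex_bij_witness[of _ "\<lambda>i. card Omega + 2 - i" "\<lambda>j. card Omega + 2 - j"]) (auto simp: Suc_diff_le)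
  moreover have "reset_word Q Sig delta (a # w)"
    using w(1,2) letter image_word_append[of Q delta "[a]" w]
    by (simp add: reset_word_def rank_def Omega_def)
  ultimately show ?thesis using w(3) by (intro exI[of _ "a # w"]) auto
qed

end

lemma power_le_of_le_root: "0 < n \<Longrightarrow> 0 \<le> x \<Longrightarrow> x \<le> root n y \<Longrightarrow> x ^ n \<le> y"
  by (metis real_root_le_iff real_root_power_cancel)

lemma six_sum_choose_two: "6 * (\<Sum>i=2..r. i choose 2) + r = r ^ 3"
proof (induction r)
  case 0
  then show ?case by simp
next
  case (Suc r)
  show ?case
  proof (cases "r = 0")
    case False
    then have "{2..Suc r} = insert (Suc r) {2..r}" by auto
    then have "(\<Sum>i=2..Suc r. i choose 2) = (Suc r choose 2) + (\<Sum>i=2..r. i choose 2)" by simp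
    moreover have "2 * (Suc r choose 2) = Suc r * r"
      by (simp add: choose_two)
    ultimately show ?thesis using Suc.IH by (simp add: eval_nat_numeral algebra_simps)
  qed simp
qed

lemma cubic_length_bound:
  fixes r n :: nat
  assumes "1 \<le> r" and "r ^ 3 + 6 \<le> 6 * n"
  shows "1 + n * (\<Sum>i=2..r. i choose 2) \<le> (n - 1)\<^sup>2"
proof -
  define c where "c = (\<Sum>i=2..r. i choose 2)"
  have "6 * c + 7 \<le> 6 * n" using six_sum_choose_two[of r] assms by (simp add: c_def)
  then have c_le: "c + 2 \<le> n" by linarith
  define m where "m = n - 2"
  have m: "n = m + 2" and "c \<le> m" using c_le by (simp_all add: m_def)
  then have "n * c \<le> n * m" by (intro mult_le_mono2)
  moreover have "(n - 1)\<^sup>2 = n * m + 1" by (simp add: m power2_eq_square algebra_simps)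
  ultimately show ?thesis by (simp add: c_def)
qed

theorem corollary1:
  fixes Q :: "'q set" and Sig :: "'s set" and delta :: "'q \<Rightarrow> 's \<Rightarrow> 'q"
    and n :: nat and a :: 's
  assumes "dfa Q Sig delta"
    and "synchronizing Q Sig delta"
    and "card Q = n"
    and "a \<in> Sig"
    and "real (rank Q delta [a]) \<le> root 3 (6 * real n - 6)"
  shows "rt Q Sig delta \<le> (n - 1)\<^sup>2"
proof -
  interpret synchronizing_dfa_letter Q Sig delta a
    using assms(1,2,4) by unfold_locales
  obtain w where w: "reset_word Q Sig delta w" "length w \<le> 1 + n * (\<Sum>i=2..card Omega. i choose 2)"
    using reset_word_length_bound assms(3) by blast
  have "card Omega \<ge> 1"
    using Omega_nonempty finite_Omega by (simp add: Suc_le_eq card_gt_0_iff)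
  have "real (card Omega) ^ 3 \<le> 6 * real n - 6"
    using assms(5) by (intro power_le_of_le_root) (simp_all add: rank_def Omega_def)
  then have "real (card Omega ^ 3 + 6) \<le> real (6 * n)" by simp
  then have "card Omega ^ 3 + 6 \<le> 6 * n" by (simp only: of_nat_le_iff)
  then have "1 + n * (\<Sum>i=2..card Omega. i choose 2) \<le> (n - 1)\<^sup>2"
    by (rule cubic_length_bound[OF \<open>card Omega \<ge> 1\<close>])
  with rt_le_length[OF w(1)] w(2) show ?thesis by linarith
qed

end
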